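(* Let $n\ge 4$, let $H$ be a Hamiltonian cycle of the complete graph $K_n$ on $V=\{1,\dots,n\}$, and let $k\in\{2,3,\dots,n\}$. Let $H'$ be any $k$-exchange of $H$. Then one application of the vertex-based random solution generation with the matrix $\Pi^H$ outputs $H'$ with probability $\Omega(1/n^{2k-1})$.
   Context: For a Hamiltonian cycle $H$, $\Pi^H=(\pi_{i,j})$ is the symmetric $n\times n$ matrix with $\pi_{i,i}=0$, $\pi_{i,j}=1-\frac1n$ if $\{i,j\}\in H$ and $\pi_{i,j}=\frac{1}{n(n-2)}$ otherwise. (In the algorithm studied, $\Pi^H$ is the sampling matrix in iteration $t+1$ when $H$ is the best solution sampled in iteration $t$.) Vertex-based generation from $\Pi$: pick a start vertex uniformly at random; while unvisited vertices remain, from the current vertex $v$ move to an unvisited vertex $v'$ chosen with probability $\pi_{v,v'}/\sum_{j\text{ unvisited}}\pi_{v,j}$; output the Hamiltonian cycle visiting vertices in this order. A $k$-exchange of $H$ is a Hamiltonian cycle obtained from $H$ by removing $k$ of its edges and adding $k$ edges not in $H$. *)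

theory Defs
  imports Complex_Main
begin

text \<open>Vertices of K_n are 1..n; undirected edges are 2-element sets.\<close>

definition vertices :: "nat \<Rightarrow> nat set" where
  "vertices n = {1..n}"

definition cycle_edges :: "nat list \<Rightarrow> nat set set" where
  "cycle_edges xs = {{xs ! i, xs ! ((i + 1) mod length xs)} | i. i < length xs}"

definition is_tour :: "nat \<Rightarrow> nat list \<Rightarrow> bool" where
  "is_tour n xs \<longleftrightarrow> distinct xs \<and> set xs = vertices n"

definition ham_cycle :: "nat \<Rightarrow> nat set set \<Rightarrow> bool" where
  "ham_cycle n H \<longleftrightarrow> (\<exists>xs. is_tour n xs \<and> H = cycle_edges xs)"

definition k_exchange :: "nat \<Rightarrow> nat \<Rightarrow> nat set set \<Rightarrow> nat set set \<Rightarrow> bool" where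
  "k_exchange n k H H' \<longleftrightarrow> ham_cycle n H' \<and>
     (\<exists>R A. R \<subseteq> H \<and> card R = k \<and> A \<inter> H = {} \<and> card A = k \<and> H' = (H - R) \<union> A)"

definition Pi_H :: "nat \<Rightarrow> nat set set \<Rightarrow> nat \<Rightarrow> nat \<Rightarrow> real" where
  "Pi_H n H i j = (if i = j then 0
                   else if {i, j} \<in> H then 1 - 1 / real n
                   else 1 / (real n * (real n - 2)))"

text \<open>Probability of the remaining moves along the list, where U is the set of
  unvisited vertices (the current vertex, head of the list, already counted as visited).\<close>
fun path_prob :: "(nat \<Rightarrow> nat \<Rightarrow> real) \<Rightarrow> nat set \<Rightarrow> nat list \<Rightarrow> real" where
  "path_prob P U [] = 1"
| "path_prob P U [v] = 1"
| "path_prob P U (v # w # xs) =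
     P v w / (\<Sum>j\<in>U. P v j) * path_prob P (U - {w}) (w # xs)"

text \<open>Probability that vertex-based generation from P produces the vertex order xs
  (start vertex uniform on 1..n).\<close>
definition seq_prob :: "nat \<Rightarrow> (nat \<Rightarrow> nat \<Rightarrow> real) \<Rightarrow> nat list \<Rightarrow> real" where
  "seq_prob n P xs = 1 / real n * path_prob P (vertices n - {hd xs}) xs"

definition gen_prob :: "nat \<Rightarrow> (nat \<Rightarrow> nat \<Rightarrow> real) \<Rightarrow> nat set set \<Rightarrow> real" where
  "gen_prob n P C = (\<Sum>xs\<in>{xs. is_tour n xs \<and> cycle_edges xs = C}. seq_prob n P xs)"

end

theory Submission
  imports Defs
begin

text \<open>Write H' as a vertex order whose closing edge is one of its k edges outside H; then
  exactly k - 1 steps of the order leave H. When the generation follows this order, a step along H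
  from v has probability at least (1 - 1/n) / B, where B \<in> {1, 2} bounds the row sum of Pi^H
  over the unvisited vertices, and B = 1 as soon as an H-neighbour of v is already visited, which
  is the case after every step along H. A step outside H has probability at least 1/(2n(n - 2));
  together with the factor 1/2 that may be lost at the next vertex this is still at least
  1/(4n^2). With (1 - 1/n)^(n-1) \<ge> 1/e and the start vertex chosen with probability 1/n, the
  order is generated with probability at least (1/(2en)) (1/(4n^2))^(k-1).\<close>

fun steps :: "'a list \<Rightarrow> 'a set list" where
  "steps (v # w # r) = {v, w} # steps (w # r)"
| "steps _ = []"

lemma steps_conv_zip: "steps xs = map (\<lambda>(a, b). {a, b}) (zip xs (tl xs))"
  by (induction xs rule: steps.induct) auto

lemma set_steps: "set (steps xs) = {{xs ! i, xs ! Suc i} | i. Suc i < length xs}"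
  by (force simp: steps_conv_zip set_zip nth_tl)

lemma steps_Cons: "ys \<noteq> [] \<Longrightarrow> steps (x # ys) = {x, hd ys} # steps ys"
  by (cases ys) auto

lemma steps_append_single: "xs \<noteq> [] \<Longrightarrow> steps (xs @ [x]) = steps xs @ [{last xs, x}]"
  by (induction xs rule: steps.induct) auto

lemma steps_subset: "e \<in> set (steps xs) \<Longrightarrow> e \<subseteq> set xs"
  by (induction xs rule: steps.induct) auto

lemma distinct_steps: "distinct xs \<Longrightarrow> distinct (steps xs)"
  by (induction xs rule: steps.induct) (auto dest: steps_subset)

lemma in_set_steps_split:
  "e \<in> set (steps xs) \<Longrightarrow> \<exists>as a b bs. xs = as @ a # b # bs \<and> e = {a, b}"
proof (induction xs rule: steps.induct)
  case (1 v w r)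
  then show ?case by (auto intro: exI[of _ "[]"]) (metis append_Cons)
qed auto

lemma cycle_edges_conv_steps:
  assumes "xs \<noteq> []"
  shows "cycle_edges xs = insert {last xs, hd xs} (set (steps xs))"
proof -
  let ?L = "length xs"
  have L: "?L = Suc (?L - 1)" using assms by simp
  have "cycle_edges xs = (\<lambda>i. {xs ! i, xs ! (Suc i mod ?L)}) ` {..<Suc (?L - 1)}"
    unfolding cycle_edges_def using L by auto
  also have "\<dots> = insert {last xs, hd xs} ((\<lambda>i. {xs ! i, xs ! Suc i}) ` {..<?L - 1})"
    unfolding lessThan_Suc image_insert using assms
    by (auto simp: last_conv_nth hd_conv_nth intro!: image_cong)
  also have "(\<lambda>i. {xs ! i, xs ! Suc i}) ` {..<?L - 1} = set (steps xs)"
    by (auto simp: set_steps)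
  finally show ?thesis .
qed

lemma cycle_edges_rotate1: "cycle_edges (rotate1 xs) = cycle_edges xs"
proof (cases xs)
  case (Cons x ys)
  then show ?thesis
    by (cases "ys = []") (auto simp: cycle_edges_conv_steps steps_append_single steps_Cons)
qed simp

lemma cycle_edges_rotate: "cycle_edges (rotate m xs) = cycle_edges xs"
  by (induction m) (auto simp: cycle_edges_rotate1)

lemma cycle_edges_subset: "e \<in> cycle_edges xs \<Longrightarrow> e \<subseteq> set xs"
  by (cases "xs = []") (auto simp: cycle_edges_def dest: steps_subset)

lemma closing_edge_notin_steps:
  assumes "distinct xs" "3 \<le> length xs"
  shows "{last xs, hd xs} \<notin> set (steps xs)"
proof -
  obtain v w r where xs: "xs = v # w # r"
    using assms(2) by (cases xs rule: steps.cases) auto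
  with assms(2) have "r \<noteq> []" by auto
  with xs have "last xs \<noteq> w" "last xs \<noteq> v" using assms(1) by auto
  moreover have "v \<notin> e" if "e \<in> set (steps (w # r))" for e
    using steps_subset[OF that] assms(1) xs by auto
  ultimately show ?thesis using xs by (auto simp: doubleton_eq_iff)
qed

lemma card_cycle_edges_diff:
  assumes "distinct xs" "3 \<le> length xs" "{last xs, hd xs} \<notin> H"
  shows "card (cycle_edges xs - H) = Suc (length (filter (\<lambda>e. e \<notin> H) (steps xs)))"
proof -
  let ?es = "{last xs, hd xs} # steps xs"
  have "xs \<noteq> []" using assms(2) by auto
  then have "cycle_edges xs - H = set (filter (\<lambda>e. e \<notin> H) ?es)"
    by (auto simp: cycle_edges_conv_steps)
  moreover have "distinct ?es"
    using assms(1,2) by (simp add: distinct_steps closing_edge_notin_steps)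
  ultimately have "card (cycle_edges xs - H) = length (filter (\<lambda>e. e \<notin> H) ?es)"
    by (metis distinct_card distinct_filter)
  then show ?thesis using assms(3) by simp
qed

lemma cycle_edges_rotate_to_closing:
  assumes "e \<in> cycle_edges xs"
  obtains m where "e = {last (rotate m xs), hd (rotate m xs)}"
proof -
  have "xs \<noteq> []" using assms by (auto simp: cycle_edges_def)
  then consider "e = {last xs, hd xs}" | "e \<in> set (steps xs)"
    using assms by (auto simp: cycle_edges_conv_steps)
  then show thesis
  proof cases
    case 1
    then show thesis using that[of 0] by simp
  next
    case 2
    then obtain as a b bs where "xs = (as @ [a]) @ b # bs" "e = {a, b}"
      using in_set_steps_split by fastforce
    then have "e = {last (rotate (length (as @ [a])) xs), hd (rotate (length (as @ [a])) xs)}"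
      by (simp only: rotate_append) (auto simp: insert_commute)
    then show thesis by (rule that)
  qed
qed

lemma cycle_edges_neighbours:
  assumes "distinct xs"
  obtains a b where "{u. {v, u} \<in> cycle_edges xs} \<subseteq> {a, b}"
proof (cases "v \<in> set xs")
  case True
  then obtain as bs where "xs = as @ v # bs" by (meson split_list)
  then obtain r where rot: "cycle_edges xs = cycle_edges (v # r)" and v: "v \<notin> set r"
    using assms cycle_edges_rotate[of "length as" xs] by (force simp: rotate_append)
  have "{u. {v, u} \<in> cycle_edges xs} \<subseteq> {last (v # r), hd r}"
  proof (cases "r = []")
    case False
    have "v \<notin> e" if "e \<in> set (steps r)" for e
      using steps_subset[OF that] v by auto
    then show ?thesis
      using False rot by (auto simp: cycle_edges_conv_steps steps_Cons doubleton_eq_iff)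
  qed (use rot in \<open>auto simp: cycle_edges_conv_steps\<close>)
  then show thesis by (rule that)
next
  case False
  then have "{u. {v, u} \<in> cycle_edges xs} = {}" by (auto dest: cycle_edges_subset)
  then show thesis using that by blast
qed

lemma length_tour: "is_tour n xs \<Longrightarrow> length xs = n"
  by (auto simp: is_tour_def vertices_def dest!: distinct_card)

lemma ham_cycle_neighbours:
  assumes "ham_cycle n H"
  shows "\<exists>a b. {u. {v, u} \<in> H} \<subseteq> {a, b}"
proof -
  obtain xs where "distinct xs" "H = cycle_edges xs" using assms by (auto simp: ham_cycle_def is_tour_def)
  then show ?thesis using cycle_edges_neighbours by metis
qed

lemma card_k_exchange_new_edges:
  assumes "k_exchange n k H H'"
  shows "card (H' - H) = k"
proof -
  obtain R A where "A \<inter> H = {}" "card A = k" "H' = (H - R) \<union> A"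
    using assms by (auto simp: k_exchange_def)
  then have "H' - H = A" by auto
  with \<open>card A = k\<close> show ?thesis by simp
qed

lemma tour_with_closing_edge_notin:
  assumes "ham_cycle n H'" "H' - H \<noteq> {}"
  obtains xs where "is_tour n xs" "cycle_edges xs = H'" "{last xs, hd xs} \<notin> H"
proof -
  obtain zs where zs: "is_tour n zs" "cycle_edges zs = H'" using assms(1) by (auto simp: ham_cycle_def)
  obtain e where "e \<in> cycle_edges zs" "e \<notin> H" using assms(2) zs by blast
  then obtain m where "{last (rotate m zs), hd (rotate m zs)} \<notin> H"
    by (metis cycle_edges_rotate_to_closing)
  moreover have "is_tour n (rotate m zs)" using zs by (simp add: is_tour_def)
  ultimately show thesis using that[of "rotate m zs"] zs(2) by (simp add: cycle_edges_rotate)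
qed

lemma k_exchange_tour:
  assumes "k_exchange n k H H'" "1 \<le> k" "3 \<le> n"
  obtains xs where "is_tour n xs" "cycle_edges xs = H'"
    "length (filter (\<lambda>e. e \<notin> H) (steps xs)) = k - 1"
proof -
  have new: "card (H' - H) = k" using card_k_exchange_new_edges[OF assms(1)] .
  with assms(2) have "H' - H \<noteq> {}" by (metis card.empty not_one_le_zero)
  moreover have "ham_cycle n H'" using assms(1) by (simp add: k_exchange_def)
  ultimately obtain xs where xs: "is_tour n xs" "cycle_edges xs = H'" "{last xs, hd xs} \<notin> H"
    using tour_with_closing_edge_notin by blast
  moreover have "3 \<le> length xs" using length_tour[OF xs(1)] assms(3) by simp
  ultimately show thesis
    using that card_cycle_edges_diff[of xs H] new by (simp add: is_tour_def)
qed

lemma Pi_H_nonneg: "2 \<le> n \<Longrightarrow> 0 \<le> Pi_H n H i j"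
  by (simp add: Pi_H_def)

lemma Pi_H_pos: "4 \<le> n \<Longrightarrow> i \<noteq> j \<Longrightarrow> 0 < Pi_H n H i j"
  by (simp add: Pi_H_def)

lemma weighted_count_le:
  fixes x m q M :: real
  assumes x: "4 \<le> x" and m: "0 \<le> m" "m \<le> M" "1 \<le> M" and q: "0 \<le> q" "m + q \<le> x - 1"
  shows "m * (1 - 1 / x) + q * (1 / (x * (x - 2))) \<le> M"
proof -
  have d: "0 < x * (x - 2)" using x by simp
  have c: "0 \<le> (x - 1) * (x - 2) - 1" using mult_mono[of 3 "x - 1" 2 "x - 2"] x by linarith
  have "m * ((x - 1) * (x - 2)) + q \<le> m * ((x - 1) * (x - 2) - 1) + (x - 1)"
    using q by (simp add: algebra_simps)
  also have "\<dots> \<le> M * ((x - 1) * (x - 2) - 1) + M * (x - 1)"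
    using add_mono[OF mult_right_mono[OF m(2) c] mult_right_mono[OF m(3), of "x - 1"]] x by simp
  also have "\<dots> = M * (x * (x - 2))" by (simp add: algebra_simps)
  finally have "m * ((x - 1) * (x - 2)) + q \<le> M * (x * (x - 2))" .
  moreover have "m * (1 - 1 / x) + q * (1 / (x * (x - 2))) = (m * ((x - 1) * (x - 2)) + q) / (x * (x - 2))"
    using x by (simp add: field_simps)
  ultimately show ?thesis using d by (simp add: divide_le_eq)
qed

lemma sum_Pi_H_le:
  assumes n: "4 \<le> n" and nbrs: "{u. {v, u} \<in> H} \<subseteq> {a, b}"
    and U: "v \<notin> U" "insert v U \<subseteq> vertices n"
  shows "(\<Sum>j\<in>U. Pi_H n H v j) \<le> (if \<exists>u. {v, u} \<in> H \<and> u \<notin> U then 1 else 2)"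
proof -
  define N where "N = {j \<in> U. {v, j} \<in> H}"
  define M :: nat where "M = (if \<exists>u. {v, u} \<in> H \<and> u \<notin> U then 1 else 2)"
  have fin: "finite U" using U finite_subset by (auto simp: vertices_def)
  have "card (insert v U) \<le> n" using card_mono[OF _ U(2)] by (simp add: vertices_def)
  then have cU: "card N + card (U - N) \<le> n - 1"
    using fin U(1) card_Diff_subset[of N U] card_mono[of U N] by (auto simp: N_def)
  have cN: "card N \<le> M"
  proof (cases "\<exists>u. {v, u} \<in> H \<and> u \<notin> U")
    case True
    then obtain u where "{v, u} \<in> H" "u \<notin> U" by blast
    with nbrs have "N \<subseteq> {if u = a then b else a}" by (auto simp: N_def)
    then show ?thesis using True card_mono[of "{if u = a then b else a}" N] by (simp add: M_def)
  next
    case False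
    have "card N \<le> card {a, b}" using nbrs by (intro card_mono) (auto simp: N_def)
    with False show ?thesis by (auto simp: M_def card_insert_if split: if_splits)
  qed
  have "(\<Sum>j\<in>U. Pi_H n H v j) = (\<Sum>j\<in>N. Pi_H n H v j) + (\<Sum>j\<in>U - N. Pi_H n H v j)"
    using fin by (subst sum.subset_diff[of N]) (auto simp: N_def)
  also have "\<dots> = (\<Sum>j\<in>N. 1 - 1 / real n) + (\<Sum>j\<in>U - N. 1 / (real n * (real n - 2)))"
    using U(1) by (intro arg_cong2[where f = "(+)"] sum.cong) (auto simp: N_def Pi_H_def)
  also have "\<dots> = card N * (1 - 1 / real n) + card (U - N) * (1 / (real n * (real n - 2)))"
    by simp
  also have "\<dots> \<le> M"
    using cU cN n by (intro weighted_count_le) (auto simp: M_def)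
  finally show ?thesis by (auto simp: M_def split: if_splits)
qed

lemma Pi_H_step_prob_ge:
  assumes n: "4 \<le> n" and nbrs: "{u. {v, u} \<in> H} \<subseteq> {a, b}"
    and U: "v \<notin> U" "insert v U \<subseteq> vertices n" and w: "w \<in> U"
  shows "{v, w} \<in> H \<Longrightarrow> (1 - 1 / real n) / (if \<exists>u. {v, u} \<in> H \<and> u \<notin> U then 1 else 2)
      \<le> Pi_H n H v w / (\<Sum>j\<in>U. Pi_H n H v j)"
    and "{v, w} \<notin> H \<Longrightarrow> 1 / (real n * (real n - 2)) / 2 \<le> Pi_H n H v w / (\<Sum>j\<in>U. Pi_H n H v j)"
proof -
  let ?B = "if \<exists>u. {v, u} \<in> H \<and> u \<notin> U then 1 else 2 :: real"
  have "finite U" using U finite_subset by (auto simp: vertices_def)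
  then have "Pi_H n H v w \<le> (\<Sum>j\<in>U. Pi_H n H v j)"
    using n by (intro member_le_sum[OF w]) (simp_all add: Pi_H_nonneg)
  moreover have "0 < Pi_H n H v w" using U(1) w by (intro Pi_H_pos[OF n]) blast
  ultimately have step: "Pi_H n H v w / ?B \<le> Pi_H n H v w / (\<Sum>j\<in>U. Pi_H n H v j)"
    using sum_Pi_H_le[OF n nbrs U] by (intro divide_left_mono) auto
  have "v \<noteq> w" using U(1) w by blast
  then show "{v, w} \<in> H \<Longrightarrow> (1 - 1 / real n) / ?B \<le> Pi_H n H v w / (\<Sum>j\<in>U. Pi_H n H v j)"
    using step by (simp add: Pi_H_def)
  have "1 / (real n * (real n - 2)) / 2 \<le> 1 / (real n * (real n - 2)) / ?B"
    using n by (intro divide_left_mono) auto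
  with \<open>v \<noteq> w\<close> show "{v, w} \<notin> H \<Longrightarrow> 1 / (real n * (real n - 2)) / 2 \<le> Pi_H n H v w / (\<Sum>j\<in>U. Pi_H n H v j)"
    using step by (simp add: Pi_H_def)
qed

lemma non_edge_factor_le:
  assumes n: "4 \<le> n" and B: "1 \<le> B"
  shows "(1 - 1 / real n) * (1 / (4 * real n ^ 2)) / B \<le> 1 / (real n * (real n - 2)) / 4"
proof -
  have "(1 - 1 / real n) * (1 / (4 * real n ^ 2)) / B \<le> 1 * (1 / (4 * real n ^ 2)) / 1"
    using B n by (intro frac_le mult_right_mono) auto
  moreover have "0 < real n * (real n - 2) * 4" "real n * (real n - 2) * 4 \<le> 4 * real n ^ 2"
    using n by (auto simp: power2_eq_square algebra_simps)
  ultimately show ?thesis using frac_le[of 1 1 "real n * (real n - 2) * 4" "4 * real n ^ 2"] by simp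
qed

lemma path_prob_Pi_H_ge:
  assumes n: "4 \<le> n" and nbrs: "\<And>v. \<exists>a b. {u. {v, u} \<in> H} \<subseteq> {a, b}"
  shows "distinct (v # rest) \<Longrightarrow> set (v # rest) \<subseteq> vertices n \<Longrightarrow>
    (1 - 1 / real n) ^ length rest * (1 / (4 * real n ^ 2)) ^ length (filter (\<lambda>e. e \<notin> H) (steps (v # rest)))
      / (if \<exists>u. {v, u} \<in> H \<and> u \<notin> set rest then 1 else 2)
    \<le> path_prob (Pi_H n H) (set rest) (v # rest)"
proof (induction rest arbitrary: v)
  case (Cons w r)
  let ?g = "1 - 1 / real n" and ?f = "1 / (4 * real n ^ 2)"
  define B :: real where "B = (if \<exists>u. {v, u} \<in> H \<and> u \<notin> set (w # r) then 1 else 2)"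
  define X where "X = ?g ^ length r * ?f ^ length (filter (\<lambda>e. e \<notin> H) (steps (w # r)))"
  define ratio where "ratio = Pi_H n H v w / (\<Sum>j\<in>set (w # r). Pi_H n H v j)"
  define P where "P = path_prob (Pi_H n H) (set r) (w # r)"
  obtain a b where ab: "{u. {v, u} \<in> H} \<subseteq> {a, b}" using nbrs by blast
  note step = Pi_H_step_prob_ge[OF n ab, of "set (w # r)" w, folded B_def ratio_def]
  have IH: "X / (if \<exists>u. {w, u} \<in> H \<and> u \<notin> set r then 1 else 2) \<le> P"
    unfolding X_def P_def using Cons by auto
  have pp: "path_prob (Pi_H n H) (set (w # r)) (v # w # r) = ratio * P"
    unfolding ratio_def P_def using Cons.prems by (simp add: insert_Diff_if)
  have B: "1 \<le> B" "B \<le> 2" by (auto simp: B_def)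
  have X: "0 \<le> X" using n by (simp add: X_def)
  have ratio: "0 \<le> ratio" using n by (simp add: ratio_def Pi_H_nonneg sum_nonneg)
  show ?case
  proof (cases "{v, w} \<in> H")
    case True
    then have "\<exists>u. {w, u} \<in> H \<and> u \<notin> set r" using Cons.prems by (auto simp: insert_commute)
    with IH have "X \<le> P" by simp
    moreover have "?g / B \<le> ratio" using step(1) True Cons.prems by auto
    ultimately have "?g / B * X \<le> ratio * P" using X ratio by (intro mult_mono) auto
    then show ?thesis using True pp by (simp add: X_def B_def ac_simps)
  next
    case False
    let ?\<epsilon> = "1 / (real n * (real n - 2))"
    have "?g * ?f / B * X \<le> ?\<epsilon> / 4 * X" using non_edge_factor_le[OF n B(1)] X by (rule mult_right_mono)
    also have "\<dots> = ?\<epsilon> / 2 * (X / 2)" by simp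
    also have "\<dots> \<le> ratio * P"
    proof (intro mult_mono)
      show "?\<epsilon> / 2 \<le> ratio" using step(2) False Cons.prems by auto
      have "X / 2 \<le> X / (if \<exists>u. {w, u} \<in> H \<and> u \<notin> set r then 1 else 2)"
        using X by (intro divide_left_mono) auto
      with IH show "X / 2 \<le> P" by linarith
    qed (use X ratio in auto)
    finally show ?thesis using False pp by (simp add: X_def B_def ac_simps)
  qed
qed simp

lemma path_prob_nonneg: "(\<And>i j. 0 \<le> P i j) \<Longrightarrow> 0 \<le> path_prob P U xs"
  by (induction P U xs rule: path_prob.induct) (auto intro!: mult_nonneg_nonneg divide_nonneg_nonneg sum_nonneg)

lemma seq_prob_le_gen_prob:
  assumes "is_tour n xs" "\<And>i j. 0 \<le> P i j"
  shows "seq_prob n P xs \<le> gen_prob n P (cycle_edges xs)"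
proof -
  have "finite {xs. is_tour n xs \<and> cycle_edges xs = C}" for C
    by (rule finite_subset[OF _ finite_subset_distinct[of "vertices n"]]) (auto simp: is_tour_def vertices_def)
  moreover have "path_prob P U ys \<ge> 0" for U ys
    using assms(2) by (rule path_prob_nonneg)
  ultimately show ?thesis
    unfolding gen_prob_def using assms(1) by (intro member_le_sum) (auto simp: seq_prob_def)
qed

lemma seq_prob_Pi_H_ge:
  assumes n: "4 \<le> n" and H: "ham_cycle n H" and xs: "is_tour n xs"
  shows "(1 - 1 / real n) ^ (n - 1) * (1 / (4 * real n ^ 2)) ^ length (filter (\<lambda>e. e \<notin> H) (steps xs))
    / (2 * real n) \<le> seq_prob n (Pi_H n H) xs"
proof -
  obtain v rest where vr: "xs = v # rest" using xs n length_tour by (cases xs) fastforce+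
  have "distinct (v # rest)" "set (v # rest) = vertices n" using xs vr by (auto simp: is_tour_def)
  then have rest: "vertices n - {hd xs} = set rest" "length rest = n - 1"
    using vr length_tour[OF xs] by auto
  let ?A = "(1 - 1 / real n) ^ (n - 1) * (1 / (4 * real n ^ 2)) ^ length (filter (\<lambda>e. e \<notin> H) (steps xs))"
  have "?A / 2 \<le> ?A / (if \<exists>u. {v, u} \<in> H \<and> u \<notin> set rest then 1 else 2)"
    using n by (intro divide_left_mono) auto
  also have "\<dots> \<le> path_prob (Pi_H n H) (set rest) (v # rest)"
    using path_prob_Pi_H_ge[OF n ham_cycle_neighbours[OF H] \<open>distinct (v # rest)\<close>] \<open>set (v # rest) = _\<close>
    by (simp only: vr rest(2) order_refl)
  finally have "?A / 2 \<le> path_prob (Pi_H n H) (set rest) (v # rest)" .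
  then have "?A / 2 / real n \<le> path_prob (Pi_H n H) (set rest) (v # rest) / real n"
    by (rule divide_right_mono) simp
  then show ?thesis using vr rest by (simp add: seq_prob_def)
qed

lemma one_minus_inverse_power_ge:
  assumes "2 \<le> n"
  shows "exp (-1) \<le> (1 - 1 / real n) ^ (n - 1)"
proof -
  define m where "m = n - 1"
  have m: "0 < m" "real n = real m + 1" using assms by (auto simp: m_def)
  have "(1 + 1 / real m) ^ m \<le> exp 1"
    by (rule exp_ge_one_plus_x_over_n_power_n) (use m in auto)
  moreover have "1 - 1 / real n = 1 / (1 + 1 / real m)"
    using m by (simp add: field_simps)
  then have "(1 - 1 / real n) ^ (n - 1) = 1 / (1 + 1 / real m) ^ m"
    by (simp add: m_def power_one_over)
  moreover have "0 < (1 + 1 / real m) ^ m" by (simp add: add_pos_nonneg)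
  ultimately show ?thesis
    using frac_le[of 1 1 "(1 + 1 / real m) ^ m" "exp 1"] by (simp add: exp_minus inverse_eq_divide)
qed

theorem claim1:
  fixes k :: nat
  assumes "k \<ge> 2"
  shows "\<exists>c > 0. \<forall>n H H'. 4 \<le> n \<longrightarrow> k \<le> n \<longrightarrow> ham_cycle n H \<longrightarrow> k_exchange n k H H' \<longrightarrow>
           gen_prob n (Pi_H n H) H' \<ge> c / real n ^ (2 * k - 1)"
proof -
  define c :: real where "c = 1 / (2 * exp 1 * 4 ^ (k - 1))"
  have "c / real n ^ (2 * k - 1) \<le> gen_prob n (Pi_H n H) H'"
    if n: "4 \<le> n" and H: "ham_cycle n H" and H': "k_exchange n k H H'" for n H H'
  proof -
    let ?g = "1 - 1 / real n" and ?f = "1 / (4 * real n ^ 2)"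
    obtain xs where xs: "is_tour n xs" "cycle_edges xs = H'"
      "length (filter (\<lambda>e. e \<notin> H) (steps xs)) = k - 1"
      using k_exchange_tour[OF H'] assms n by auto
    have "2 * k - 1 = Suc (2 * (k - 1))" using assms by simp
    then have "c / real n ^ (2 * k - 1) = exp (-1) * ?f ^ (k - 1) / (2 * real n)"
      by (simp add: c_def power_mult exp_minus field_simps)
    also have "\<dots> \<le> ?g ^ (n - 1) * ?f ^ (k - 1) / (2 * real n)"
      using one_minus_inverse_power_ge[of n] n by (simp add: divide_right_mono mult_right_mono)
    also have "\<dots> \<le> seq_prob n (Pi_H n H) xs" using seq_prob_Pi_H_ge[OF n H xs(1)] xs(3) by simp
    also have "\<dots> \<le> gen_prob n (Pi_H n H) H'"
      using seq_prob_le_gen_prob[OF xs(1)] Pi_H_nonneg n xs(2) by simp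
    finally show ?thesis .
  qed
  moreover have "0 < c" by (simp add: c_def)
  ultimately show ?thesis by blast
qed

end
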